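(* Let $(f_0,\dots,f_4)$ be a rational solution of $A_4(\alpha_0,\dots,\alpha_4)$ some of whose components have a pole at $t=\infty$ (indices modulo 5). (1) If for some $i$, $f_i$ has a pole at $t=\infty$ and $f_{i+1},f_{i+2},f_{i+3},f_{i+4}$ are regular there; or (2) if for some $i$, $f_i,f_{i+1},f_{i+3}$ have a pole at $t=\infty$ and $f_{i+2},f_{i+4}$ are regular there; or (3) if for some $i$, $f_i,f_{i+1},f_{i+2}$ have a pole at $t=\infty$ and $f_{i+3},f_{i+4}$ are regular there; or (4) if all of $f_0,\dots,f_4$ have a pole at $t=\infty$, then the Laurent series of $f_0,\dots,f_4$ at $t=\infty$ are uniquely determined (by the parameters and the case, with its index $i$). Moreover: in case (1), for each $k\in\{1,2,3,4\}$, $f_{i+k}\equiv0$ if $\alpha_{i+k}=0$; in case (2), $f_{i+2}\equiv0$ if $\alpha_{i+2}=0$ and $f_{i+4}\equiv0$ if $\alpha_{i+4}=0$; in case (3), $f_{i+3}\equiv0$ if $\alpha_{i+3}=0$ and $f_{i+4}\equiv0$ if $\alpha_{i+4}=0$.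
   Context: The $A_4^{(1)}$ Painlevé equation $A_4(\alpha_0,\dots,\alpha_4)$ with complex parameters $\alpha_j$ is the system for five functions $f_0,\dots,f_4$ of $t$ (indices in $\mathbb{Z}/5\mathbb{Z}$, ${}'=d/dt$): $f_j'=f_j(f_{j+1}-f_{j+2}+f_{j+3}-f_{j+4})+\alpha_j$ ($j=0,\dots,4$), $f_0+\dots+f_4=t$; hence $\sum_j\alpha_j=1$. A rational solution is a tuple of rational functions of $t$ satisfying it. *)

theory Defs
  imports "HOL-Analysis.Analysis" "HOL-Computational_Algebra.Polynomial"
begin

text \<open>Rational functions of t, represented as complex functions that agree with
  p/q wherever the denominator q does not vanish (values at poles are irrelevant).\<close>
definition is_rat_fun :: "(complex \<Rightarrow> complex) \<Rightarrow> bool" where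
  "is_rat_fun f \<longleftrightarrow> (\<exists>p q. q \<noteq> 0 \<and> (\<forall>t. poly q t \<noteq> 0 \<longrightarrow> f t = poly p t / poly q t))"

abbreviation comp :: "(nat \<Rightarrow> complex \<Rightarrow> complex) \<Rightarrow> nat \<Rightarrow> complex \<Rightarrow> complex" where
  "comp f j \<equiv> f (j mod 5)"

text \<open>Rational solution of A_4(alpha_0..alpha_4): the differential equations and the
  normalisation hold as identities of rational functions, i.e. for all but finitely many t.\<close>
definition A4_rational_solution ::
  "(nat \<Rightarrow> complex) \<Rightarrow> (nat \<Rightarrow> complex \<Rightarrow> complex) \<Rightarrow> bool" where
  "A4_rational_solution \<alpha> f \<longleftrightarrow>
     (\<forall>j<5. is_rat_fun (f j)) \<and>
     (\<forall>\<^sub>F t in cofinite.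
        (\<forall>j<5. (f j has_field_derivative
            (f j t * (comp f (j+1) t - comp f (j+2) t + comp f (j+3) t - comp f (j+4) t) + \<alpha> j))
            (at t)) \<and>
        f 0 t + f 1 t + f 2 t + f 3 t + f 4 t = t)"

definition pole_at_inf :: "(complex \<Rightarrow> complex) \<Rightarrow> bool" where
  "pole_at_inf g \<longleftrightarrow> filterlim g at_infinity at_infinity"

definition regular_at_inf :: "(complex \<Rightarrow> complex) \<Rightarrow> bool" where
  "regular_at_inf g \<longleftrightarrow> (\<exists>c. (g \<longlongrightarrow> c) at_infinity)"

definition in_case :: "(nat \<Rightarrow> complex \<Rightarrow> complex) \<Rightarrow> nat \<Rightarrow> nat \<Rightarrow> bool" where
  "in_case f c i \<longleftrightarrow>
    (c = 1 \<and> pole_at_inf (comp f i) \<and> regular_at_inf (comp f (i+1)) \<and>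
       regular_at_inf (comp f (i+2)) \<and> regular_at_inf (comp f (i+3)) \<and> regular_at_inf (comp f (i+4)))
  \<or> (c = 2 \<and> pole_at_inf (comp f i) \<and> pole_at_inf (comp f (i+1)) \<and> pole_at_inf (comp f (i+3)) \<and>
       regular_at_inf (comp f (i+2)) \<and> regular_at_inf (comp f (i+4)))
  \<or> (c = 3 \<and> pole_at_inf (comp f i) \<and> pole_at_inf (comp f (i+1)) \<and> pole_at_inf (comp f (i+2)) \<and>
       regular_at_inf (comp f (i+3)) \<and> regular_at_inf (comp f (i+4)))
  \<or> (c = 4 \<and> (\<forall>j<5. pole_at_inf (f j)))"

definition rat_zero :: "(complex \<Rightarrow> complex) \<Rightarrow> bool" where
  "rat_zero g \<longleftrightarrow> (\<forall>\<^sub>F t in cofinite. g t = 0)"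

end

theory Submission
  imports Defs "HOL-Computational_Algebra.Formal_Laurent_Series"
begin

text \<open>Expanding at \<open>t = \<infinity>\<close> turns a rational solution into a solution of the same system in
  Laurent series in \<open>X = 1/t\<close>. Write \<open>B j = f (j+1) - f (j+2) + f (j+3) - f (j+4)\<close>, so that
  \<open>f j' = f j * B j + \<alpha> j\<close>. Comparing orders, a pole of \<open>f j\<close> forces \<open>B j = O(1/t)\<close>; the
  normalisation \<open>f 0 + \<dots> + f 4 = t\<close> then shows, case by case, that \<open>B j\<close> has a simple pole
  whenever \<open>f j\<close> is regular, which makes \<open>f j = O(1/t)\<close>, and \<open>f j = 0\<close> if \<open>\<alpha> j = 0\<close>.
  For two solutions in the same case, the same comparison of orders in the equations for their
  differences improves their agreement by one order at a time: directly for the regular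
  components, and through the couplings \<open>B j\<close> and the normalisation for the others. Hence
  the differences vanish.\<close>

section \<open>Orders of Laurent series\<close>

definition vanishes_below :: "int \<Rightarrow> 'a::zero fls \<Rightarrow> bool" where
  "vanishes_below n x \<longleftrightarrow> (\<forall>k<n. fls_nth x k = 0)"

lemma vanishes_below_iff: "vanishes_below n x \<longleftrightarrow> x = 0 \<or> n \<le> fls_subdegree x"
proof
  assume "vanishes_below n x"
  then have "x \<noteq> 0 \<Longrightarrow> \<not> fls_subdegree x < n"
    using nth_fls_subdegree_nonzero unfolding vanishes_below_def by blast
  then show "x = 0 \<or> n \<le> fls_subdegree x" by linarith
qed (auto simp: vanishes_below_def)

lemma vanishes_below_0 [simp]: "vanishes_below n 0"
  by (simp add: vanishes_below_def)

lemma vanishes_below_subdegree: "vanishes_below (fls_subdegree x) x"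
  by (simp add: vanishes_below_iff)

lemma vanishes_below_mono: "m \<le> n \<Longrightarrow> vanishes_below n x \<Longrightarrow> vanishes_below m x"
  by (simp add: vanishes_below_def)

lemma vanishes_below_add:
  "vanishes_below n x \<Longrightarrow> vanishes_below n y \<Longrightarrow> vanishes_below n (x + y)"
  by (simp add: vanishes_below_def)

lemma vanishes_below_diff:
  fixes x y :: "'a::ab_group_add fls"
  shows "vanishes_below n x \<Longrightarrow> vanishes_below n y \<Longrightarrow> vanishes_below n (x - y)"
  by (simp add: vanishes_below_def)

lemma vanishes_below_uminus:
  fixes x :: "'a::ab_group_add fls"
  shows "vanishes_below n x \<Longrightarrow> vanishes_below n (- x)"
  by (simp add: vanishes_below_def)

lemma vanishes_below_const: "vanishes_below 0 (fls_const c)"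
  by (simp add: vanishes_below_def)

lemma vanishes_below_mult:
  fixes x y :: "'a::idom fls"
  assumes "vanishes_below n x" "vanishes_below m y"
  shows "vanishes_below (n + m) (x * y)"
  using assms by (cases "x = 0 \<or> y = 0") (auto simp: vanishes_below_iff)

lemma vanishes_below_numeral_mult_iff:
  "vanishes_below n (numeral k * x) \<longleftrightarrow> vanishes_below n (x :: 'a::field_char_0 fls)"
proof -
  have "numeral k * x = fls_const (numeral k) * x" by simp
  then show ?thesis by (simp only: vanishes_below_def) simp
qed

lemmas vanishes_below_linear_intros =
  vanishes_below_add vanishes_below_diff vanishes_below_uminus
  vanishes_below_numeral_mult_iff[THEN iffD2]

lemma vanishes_below_cancel:
  fixes x b :: "'a::idom fls"
  assumes "b \<noteq> 0" "vanishes_below n (x * b)"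
  shows "vanishes_below (n - fls_subdegree b) x"
  using assms by (cases "x = 0") (auto simp: vanishes_below_iff)

lemma eq_0_if_vanishes_below_all:
  assumes "\<And>n. n \<ge> n0 \<Longrightarrow> vanishes_below n x"
  shows "x = 0"
  using assms[of "max n0 (fls_subdegree x + 1)"] by (auto simp: vanishes_below_iff)

text \<open>With \<open>fls_X\<close> read as \<open>1/t\<close>, the derivative in \<open>t\<close> is \<open>-X\<^sup>2 d/dX\<close>.\<close>
definition t_deriv :: "'a::comm_ring_1 fls \<Rightarrow> 'a fls" where
  "t_deriv x = - (fls_X * fls_X * fls_deriv x)"

lemma t_deriv_nth: "fls_nth (t_deriv x) k = - (of_int (k - 1) * fls_nth x (k - 1))"
proof -
  have "t_deriv x = - fls_shift (-1) (fls_shift (-1) (fls_deriv x))"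
    unfolding t_deriv_def mult.assoc by (simp only: fls_X_times_conv_shift(1))
  then show ?thesis by (simp add: algebra_simps)
qed

lemma vanishes_below_t_deriv: "vanishes_below n x \<Longrightarrow> vanishes_below (n + 1) (t_deriv x)"
  by (simp add: vanishes_below_def t_deriv_nth)

lemma t_deriv_add: "t_deriv (x + y) = t_deriv x + t_deriv y"
  by (simp add: t_deriv_def algebra_simps)

lemma t_deriv_diff: "t_deriv (x - y) = t_deriv x - t_deriv y"
  by (simp add: t_deriv_def algebra_simps)

lemma t_deriv_mult: "t_deriv (x * y) = t_deriv x * y + x * t_deriv y"
  by (simp add: t_deriv_def algebra_simps)

lemma t_deriv_const: "t_deriv (fls_const c) = 0"
  by (simp add: t_deriv_def)

lemma t_deriv_X_inv: "t_deriv fls_X_inv = 1"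
proof -
  have "fls_X * fls_X_inv = (1 :: 'a fls)"
    by (simp add: fls_X_times_conv_shift(1))
  then show ?thesis
    by (simp add: t_deriv_def power2_eq_square algebra_simps)
qed

lemma t_deriv_divide:
  fixes u v :: "'a::field fls"
  assumes "v \<noteq> 0"
  shows "t_deriv (u / v) = (t_deriv u * v - u * t_deriv v) / (v * v)"
proof -
  have "t_deriv u = t_deriv (u / v) * v + (u / v) * t_deriv v"
    using t_deriv_mult[of "u / v" v] assms by simp
  then show ?thesis
    using assms by (simp add: field_simps)
qed

section \<open>Laurent expansions at infinity\<close>

definition laurent_of_poly :: "'a::comm_ring_1 poly \<Rightarrow> 'a fls" where
  "laurent_of_poly p = poly (map_poly fls_const p) fls_X_inv"

lemma laurent_of_poly_0 [simp]: "laurent_of_poly 0 = 0"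
  by (simp add: laurent_of_poly_def)

lemma laurent_of_poly_pCons:
  "laurent_of_poly (pCons a p) = fls_const a + fls_X_inv * laurent_of_poly p"
  by (simp add: laurent_of_poly_def map_poly_pCons)

lemma laurent_of_poly_const: "laurent_of_poly [:c:] = fls_const c"
  by (simp add: laurent_of_poly_pCons)

lemma laurent_of_poly_1: "laurent_of_poly 1 = 1"
  using laurent_of_poly_const[of 1] by (simp add: one_pCons)

lemma laurent_of_poly_X: "laurent_of_poly [:0, 1:] = fls_X_inv"
  by (simp add: laurent_of_poly_pCons)

lemma laurent_of_poly_add: "laurent_of_poly (p + q) = laurent_of_poly p + laurent_of_poly q"
proof (induction p q rule: poly_induct2)
  case (pCons a p b q)
  then show ?case
    by (simp add: laurent_of_poly_pCons algebra_simps fls_plus_const[symmetric])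
qed simp

lemma laurent_of_poly_diff: "laurent_of_poly (p - q) = laurent_of_poly p - laurent_of_poly q"
  using laurent_of_poly_add[of "p - q" q] by (simp add: algebra_simps)

lemma laurent_of_poly_smult: "laurent_of_poly (smult c p) = fls_const c * laurent_of_poly p"
  by (induction p) (simp_all add: laurent_of_poly_pCons algebra_simps)

lemma laurent_of_poly_mult: "laurent_of_poly (p * q) = laurent_of_poly p * laurent_of_poly q"
  by (induction p)
    (simp_all add: laurent_of_poly_pCons laurent_of_poly_add laurent_of_poly_smult algebra_simps)

lemma laurent_of_poly_nth:
  "fls_nth (laurent_of_poly p) n = (if n \<le> 0 then coeff p (nat (- n)) else 0)"
proof (induction p arbitrary: n)
  case (pCons a p)
  have "fls_nth (laurent_of_poly (pCons a p)) n
      = (if n = 0 then a else 0) + fls_nth (laurent_of_poly p) (n + 1)"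
    by (simp add: laurent_of_poly_pCons fls_X_inv_times_conv_shift)
  then show ?case
    using pCons.IH[of "n + 1"]
    by (auto simp: coeff_pCons split: nat.split) (simp_all add: nat_diff_distrib)
qed simp

lemma laurent_of_poly_eq_0_iff [simp]: "laurent_of_poly p = 0 \<longleftrightarrow> p = 0"
proof
  assume "laurent_of_poly p = 0"
  then have "coeff p k = 0" for k
    using laurent_of_poly_nth[of p "- int k"] by simp
  then show "p = 0" by (simp add: poly_eq_iff)
qed simp

lemma laurent_of_poly_subdegree:
  "p \<noteq> 0 \<Longrightarrow> fls_subdegree (laurent_of_poly p) = - int (degree p)"
  by (rule fls_subdegree_eqI) (auto simp: laurent_of_poly_nth coeff_eq_0)

lemma laurent_of_poly_pderiv: "laurent_of_poly (pderiv p) = t_deriv (laurent_of_poly p)"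
proof (induction p)
  case (pCons a p)
  have "t_deriv (laurent_of_poly (pCons a p))
      = laurent_of_poly p + fls_X_inv * t_deriv (laurent_of_poly p)"
    by (simp add: laurent_of_poly_pCons t_deriv_add t_deriv_mult t_deriv_const t_deriv_X_inv)
  with pCons.IH show ?case
    by (simp add: pderiv_pCons laurent_of_poly_add laurent_of_poly_pCons)
qed (simp add: t_deriv_def)

lemma eventually_cofinite_poly_nonzero:
  "q \<noteq> 0 \<Longrightarrow> \<forall>\<^sub>F t in cofinite. poly q t \<noteq> (0::'a::idom)"
  by (simp add: eventually_cofinite poly_roots_finite)

lemma poly_eq_0_if_eventually_cofinite:
  fixes p :: "'a::{idom,ring_char_0} poly"
  assumes "\<forall>\<^sub>F t in cofinite. poly p t = 0"
  shows "p = 0"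
proof (rule ccontr)
  assume "p \<noteq> 0"
  then have "finite ({t. poly p t = 0} \<union> {t. poly p t \<noteq> 0})"
    using assms poly_roots_finite by (simp add: eventually_cofinite)
  moreover have "{t. poly p t = 0} \<union> {t. poly p t \<noteq> 0} = UNIV" by blast
  ultimately show False
    by (simp add: infinite_UNIV_char_0)
qed

lemma eventually_at_infinity_if_cofinite:
  assumes "\<forall>\<^sub>F t in cofinite. P (t::'a::real_normed_vector)"
  shows "\<forall>\<^sub>F t in at_infinity. P t"
proof -
  have "bounded {t. \<not> P t}"
    using assms by (simp add: eventually_cofinite finite_imp_bounded)
  then obtain b where "\<And>t. \<not> P t \<Longrightarrow> norm t \<le> b"
    by (auto simp: bounded_iff)
  then show ?thesis
    by (intro eventually_at_infinityI[of "b + 1"]) force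
qed

lemma tendsto_poly_divide_poly_at_infinity:
  fixes p q :: "'a::real_normed_field poly"
  assumes "q \<noteq> 0" "degree p \<le> degree q"
  shows "\<exists>c. ((\<lambda>t. poly p t / poly q t) \<longlongrightarrow> c) at_infinity"
proof (cases "degree p < degree q")
  case True
  from poly_divide_tendsto_0_at_infinity[OF True] show ?thesis ..
next
  case False
  with assms have deg: "degree p = degree q" by simp
  have "((\<lambda>t. (poly p t / t ^ degree q) / (poly q t / t ^ degree q))
          \<longlongrightarrow> lead_coeff p / lead_coeff q) at_infinity"
    using poly_divide_tendsto_aux[of p] poly_divide_tendsto_aux[of q] assms(1)
    unfolding deg by (intro tendsto_divide) simp_all
  moreover have "\<forall>\<^sub>F t in at_infinity.
      (poly p t / t ^ degree q) / (poly q t / t ^ degree q) = poly p t / poly q t"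
  proof (rule eventually_at_infinityI[of 1])
    fix t :: 'a assume "1 \<le> norm t"
    then have "t ^ degree q \<noteq> 0" by auto
    then show "(poly p t / t ^ degree q) / (poly q t / t ^ degree q) = poly p t / poly q t"
      by simp
  qed
  ultimately have "((\<lambda>t. poly p t / poly q t) \<longlongrightarrow> lead_coeff p / lead_coeff q) at_infinity"
    by (rule Lim_transform_eventually)
  then show ?thesis ..
qed

lemma filterlim_poly_divide_poly_at_infinity:
  fixes p q :: "'a::real_normed_field poly"
  assumes "q \<noteq> 0" "degree q < degree p"
  shows "filterlim (\<lambda>t. poly p t / poly q t) at_infinity at_infinity"
proof -
  have "p \<noteq> 0" using assms(2) by auto
  have "\<forall>\<^sub>F t in cofinite. poly q t / poly p t \<noteq> 0"
    using eventually_cofinite_poly_nonzero[OF \<open>p \<noteq> 0\<close>]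
      eventually_cofinite_poly_nonzero[OF assms(1)] by eventually_elim simp
  then have "\<forall>\<^sub>F t in at_infinity. poly q t / poly p t \<noteq> 0"
    by (rule eventually_at_infinity_if_cofinite)
  with poly_divide_tendsto_0_at_infinity[OF assms(2)]
  have "filterlim (\<lambda>t. inverse (poly p t / poly q t)) (at 0) at_infinity"
    by (simp add: filterlim_atI)
  then show ?thesis
    by (simp only: filterlim_inverse_at_iff)
qed

definition laurent_at_inf :: "(complex \<Rightarrow> complex) \<Rightarrow> complex fls \<Rightarrow> bool" where
  "laurent_at_inf f a \<longleftrightarrow> (\<exists>p q. q \<noteq> 0 \<and> (\<forall>\<^sub>F t in cofinite. f t = poly p t / poly q t)
      \<and> a = laurent_of_poly p / laurent_of_poly q)"

lemma laurent_at_infE: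
  assumes "laurent_at_inf f a"
  obtains p q where "q \<noteq> 0" "\<forall>\<^sub>F t in cofinite. f t = poly p t / poly q t"
    "a = laurent_of_poly p / laurent_of_poly q"
  using assms unfolding laurent_at_inf_def by (elim exE conjE)

lemma laurent_at_infI:
  "q \<noteq> 0 \<Longrightarrow> \<forall>\<^sub>F t in cofinite. f t = poly p t / poly q t \<Longrightarrow>
    laurent_at_inf f (laurent_of_poly p / laurent_of_poly q)"
  unfolding laurent_at_inf_def by blast

lemma laurent_at_inf_exists:
  assumes "is_rat_fun f"
  shows "\<exists>a. laurent_at_inf f a"
proof -
  obtain p q where "q \<noteq> 0" and pq: "\<And>t. poly q t \<noteq> 0 \<Longrightarrow> f t = poly p t / poly q t"
    using assms unfolding is_rat_fun_def by blast
  moreover from \<open>q \<noteq> 0\<close> have "\<forall>\<^sub>F t in cofinite. f t = poly p t / poly q t"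
    by (rule eventually_mono[OF eventually_cofinite_poly_nonzero]) (rule pq)
  ultimately show ?thesis
    unfolding laurent_at_inf_def by blast
qed

lemma laurent_at_inf_unique:
  assumes "laurent_at_inf f a" "laurent_at_inf g b" "\<forall>\<^sub>F t in cofinite. f t = g t"
  shows "a = b"
proof -
  obtain p q where pq: "q \<noteq> 0" "\<forall>\<^sub>F t in cofinite. f t = poly p t / poly q t"
      "a = laurent_of_poly p / laurent_of_poly q"
    using assms(1) by (rule laurent_at_infE)
  obtain r s where rs: "s \<noteq> 0" "\<forall>\<^sub>F t in cofinite. g t = poly r t / poly s t"
      "b = laurent_of_poly r / laurent_of_poly s"
    using assms(2) by (rule laurent_at_infE)
  have "\<forall>\<^sub>F t in cofinite. poly (p * s - r * q) t = 0"
    using pq(2) rs(2) assms(3) eventually_cofinite_poly_nonzero[OF pq(1)]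
      eventually_cofinite_poly_nonzero[OF rs(1)]
    by eventually_elim (simp add: field_simps)
  then have "p * s = r * q"
    using poly_eq_0_if_eventually_cofinite by fastforce
  then have "laurent_of_poly p * laurent_of_poly s = laurent_of_poly r * laurent_of_poly q"
    by (simp flip: laurent_of_poly_mult)
  then show ?thesis
    using pq(1,3) rs(1,3) by (simp add: frac_eq_eq)
qed

lemma laurent_at_inf_eq:
  assumes "laurent_at_inf f a" "laurent_at_inf g a"
  shows "\<forall>\<^sub>F t in cofinite. f t = g t"
proof -
  obtain p q where pq: "q \<noteq> 0" "\<forall>\<^sub>F t in cofinite. f t = poly p t / poly q t"
      "a = laurent_of_poly p / laurent_of_poly q"
    using assms(1) by (rule laurent_at_infE)
  obtain r s where rs: "s \<noteq> 0" "\<forall>\<^sub>F t in cofinite. g t = poly r t / poly s t"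
      "a = laurent_of_poly r / laurent_of_poly s"
    using assms(2) by (rule laurent_at_infE)
  have "laurent_of_poly (p * s) = laurent_of_poly (r * q)"
    using pq(1,3) rs(1,3) by (simp add: frac_eq_eq laurent_of_poly_mult)
  then have "laurent_of_poly (p * s - r * q) = 0"
    by (simp add: laurent_of_poly_diff)
  then have "p * s = r * q" by simp
  then have cross: "poly p t * poly s t = poly r t * poly q t" for t
    by (metis poly_mult)
  show ?thesis
    using pq(2) rs(2) eventually_cofinite_poly_nonzero[OF pq(1)]
      eventually_cofinite_poly_nonzero[OF rs(1)]
    by eventually_elim (simp add: frac_eq_eq cross)
qed

lemma laurent_at_inf_const: "laurent_at_inf (\<lambda>t. c) (fls_const c)"
  unfolding laurent_at_inf_def
  by (intro exI[of _ "[:c:]"] exI[of _ 1]) (simp add: laurent_of_poly_const laurent_of_poly_1)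

lemma laurent_at_inf_ident: "laurent_at_inf (\<lambda>t. t) fls_X_inv"
  unfolding laurent_at_inf_def
  by (intro exI[of _ "[:0, 1:]"] exI[of _ 1]) (simp add: laurent_of_poly_X laurent_of_poly_1)

lemma rat_zero_if_laurent_at_inf_0: "laurent_at_inf f 0 \<Longrightarrow> rat_zero f"
  using laurent_at_inf_eq[of f 0 "\<lambda>t. 0"] laurent_at_inf_const[of 0] by (simp add: rat_zero_def)

lemma laurent_at_inf_add:
  assumes "laurent_at_inf f a" "laurent_at_inf g b"
  shows "laurent_at_inf (\<lambda>t. f t + g t) (a + b)"
proof -
  obtain p q where pq: "q \<noteq> 0" "\<forall>\<^sub>F t in cofinite. f t = poly p t / poly q t"
      "a = laurent_of_poly p / laurent_of_poly q"
    using assms(1) by (rule laurent_at_infE)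
  obtain r s where rs: "s \<noteq> 0" "\<forall>\<^sub>F t in cofinite. g t = poly r t / poly s t"
      "b = laurent_of_poly r / laurent_of_poly s"
    using assms(2) by (rule laurent_at_infE)
  have "\<forall>\<^sub>F t in cofinite. f t + g t = poly (p * s + r * q) t / poly (q * s) t"
    using pq(2) rs(2) eventually_cofinite_poly_nonzero[OF pq(1)]
      eventually_cofinite_poly_nonzero[OF rs(1)]
    by eventually_elim (simp add: add_frac_eq)
  then have "laurent_at_inf (\<lambda>t. f t + g t)
      (laurent_of_poly (p * s + r * q) / laurent_of_poly (q * s))"
    using pq(1) rs(1) by (intro laurent_at_infI) simp_all
  then show ?thesis
    using pq(1,3) rs(1,3) by (simp add: laurent_of_poly_add laurent_of_poly_mult add_frac_eq)
qed

lemma laurent_at_inf_uminus: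
  assumes "laurent_at_inf f a"
  shows "laurent_at_inf (\<lambda>t. - f t) (- a)"
proof -
  obtain p q where pq: "q \<noteq> 0" "\<forall>\<^sub>F t in cofinite. f t = poly p t / poly q t"
      "a = laurent_of_poly p / laurent_of_poly q"
    using assms by (rule laurent_at_infE)
  have "laurent_at_inf (\<lambda>t. - f t) (laurent_of_poly (- p) / laurent_of_poly q)"
    using pq(1,2) by (intro laurent_at_infI) (auto elim: eventually_mono)
  then show ?thesis
    using pq(3) laurent_of_poly_diff[of 0 p] by simp
qed

lemma laurent_at_inf_diff:
  "laurent_at_inf f a \<Longrightarrow> laurent_at_inf g b \<Longrightarrow> laurent_at_inf (\<lambda>t. f t - g t) (a - b)"
  using laurent_at_inf_add[OF _ laurent_at_inf_uminus] by simp

lemma laurent_at_inf_mult: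
  assumes "laurent_at_inf f a" "laurent_at_inf g b"
  shows "laurent_at_inf (\<lambda>t. f t * g t) (a * b)"
proof -
  obtain p q where pq: "q \<noteq> 0" "\<forall>\<^sub>F t in cofinite. f t = poly p t / poly q t"
      "a = laurent_of_poly p / laurent_of_poly q"
    using assms(1) by (rule laurent_at_infE)
  obtain r s where rs: "s \<noteq> 0" "\<forall>\<^sub>F t in cofinite. g t = poly r t / poly s t"
      "b = laurent_of_poly r / laurent_of_poly s"
    using assms(2) by (rule laurent_at_infE)
  have "\<forall>\<^sub>F t in cofinite. f t * g t = poly (p * r) t / poly (q * s) t"
    using pq(2) rs(2) by eventually_elim simp
  then have "laurent_at_inf (\<lambda>t. f t * g t) (laurent_of_poly (p * r) / laurent_of_poly (q * s))"
    using pq(1) rs(1) by (intro laurent_at_infI) simp_all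
  then show ?thesis
    using pq(3) rs(3) by (simp add: laurent_of_poly_mult)
qed

lemma laurent_at_inf_deriv:
  assumes "laurent_at_inf f a" "laurent_at_inf f' b"
    and "\<forall>\<^sub>F t in cofinite. (f has_field_derivative f' t) (at t)"
  shows "b = t_deriv a"
proof -
  obtain p q where pq: "q \<noteq> 0" "\<forall>\<^sub>F t in cofinite. f t = poly p t / poly q t"
      "a = laurent_of_poly p / laurent_of_poly q"
    using assms(1) by (rule laurent_at_infE)
  define S where "S = {t. \<not> (f t = poly p t / poly q t \<and> poly q t \<noteq> 0)}"
  have "finite S"
    using eventually_conj[OF pq(2) eventually_cofinite_poly_nonzero[OF pq(1)]]
    unfolding S_def by (simp add: eventually_cofinite)
  then have "open (- S)" and off_S: "\<forall>\<^sub>F t in cofinite. t \<notin> S"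
    by (simp_all add: finite_imp_closed open_Compl eventually_cofinite)
  have "\<forall>\<^sub>F t in cofinite. f' t = poly (pderiv p * q - p * pderiv q) t / poly (q * q) t"
    using assms(3) off_S
  proof eventually_elim
    case (elim t)
    then have "((\<lambda>t. poly p t / poly q t) has_field_derivative f' t) (at t)"
      using has_field_derivative_transform_within_open[OF _ \<open>open (- S)\<close>] by (auto simp: S_def)
    moreover have "((\<lambda>t. poly p t / poly q t) has_field_derivative
        (poly (pderiv p) t * poly q t - poly p t * poly (pderiv q) t) / (poly q t * poly q t)) (at t)"
      using elim by (intro DERIV_divide poly_DERIV) (auto simp: S_def)
    ultimately show ?case
      by (simp add: DERIV_unique)
  qed
  then have "laurent_at_inf f'
      (laurent_of_poly (pderiv p * q - p * pderiv q) / laurent_of_poly (q * q))"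
    using pq(1) by (intro laurent_at_infI) simp_all
  then have "b = laurent_of_poly (pderiv p * q - p * pderiv q) / laurent_of_poly (q * q)"
    by (rule laurent_at_inf_unique[OF assms(2)]) simp
  also have "\<dots> = t_deriv a"
    using pq(1,3) by (simp add: t_deriv_divide laurent_of_poly_diff laurent_of_poly_mult
        laurent_of_poly_pderiv)
  finally show ?thesis .
qed

lemma vanishes_below_0_laurent_of_poly_divide_iff:
  fixes p q :: "'a::field poly"
  assumes "q \<noteq> 0"
  shows "vanishes_below 0 (laurent_of_poly p / laurent_of_poly q) \<longleftrightarrow> degree p \<le> degree q"
  using assms by (cases "p = 0")
    (simp_all add: vanishes_below_iff fls_divide_subdegree laurent_of_poly_subdegree)

lemma laurent_at_inf_pole:
  assumes "laurent_at_inf f a" "pole_at_inf f"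
  shows "\<not> vanishes_below 0 a"
proof
  assume "vanishes_below 0 a"
  obtain p q where pq: "q \<noteq> 0" "\<forall>\<^sub>F t in cofinite. f t = poly p t / poly q t"
      "a = laurent_of_poly p / laurent_of_poly q"
    using assms(1) by (rule laurent_at_infE)
  with \<open>vanishes_below 0 a\<close> obtain c where "((\<lambda>t. poly p t / poly q t) \<longlongrightarrow> c) at_infinity"
    using tendsto_poly_divide_poly_at_infinity vanishes_below_0_laurent_of_poly_divide_iff by metis
  moreover have "\<forall>\<^sub>F t in at_infinity. poly p t / poly q t = f t"
    using eventually_at_infinity_if_cofinite[OF pq(2)] by (simp add: eq_commute)
  ultimately have "(f \<longlongrightarrow> c) at_infinity"
    by (rule Lim_transform_eventually)
  with assms(2) show False
    unfolding pole_at_inf_def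
    using not_tendsto_and_filterlim_at_infinity[OF trivial_limit_at_infinity] by blast
qed

lemma laurent_at_inf_regular:
  assumes "laurent_at_inf f a" "regular_at_inf f"
  shows "vanishes_below 0 a"
proof (rule ccontr)
  assume "\<not> vanishes_below 0 a"
  obtain p q where pq: "q \<noteq> 0" "\<forall>\<^sub>F t in cofinite. f t = poly p t / poly q t"
      "a = laurent_of_poly p / laurent_of_poly q"
    using assms(1) by (rule laurent_at_infE)
  with \<open>\<not> vanishes_below 0 a\<close> have "filterlim (\<lambda>t. poly p t / poly q t) at_infinity at_infinity"
    by (simp add: vanishes_below_0_laurent_of_poly_divide_iff filterlim_poly_divide_poly_at_infinity)
  then have "filterlim f at_infinity at_infinity"
    using filterlim_cong[OF refl refl eventually_at_infinity_if_cofinite[OF pq(2)]] by simp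
  with assms(2) show False
    unfolding regular_at_inf_def
    using not_tendsto_and_filterlim_at_infinity[OF trivial_limit_at_infinity] by blast
qed

section \<open>Orders in first-order equations\<close>

definition simple_pole :: "'a::zero fls \<Rightarrow> bool" where
  "simple_pole x \<longleftrightarrow> x \<noteq> 0 \<and> fls_subdegree x = -1"

lemma simple_pole_X_inv_add:
  fixes w :: "'a::field fls"
  assumes "vanishes_below 0 w" "k \<noteq> 0"
  shows "simple_pole (fls_const k * fls_X_inv + w)"
proof -
  have w: "fls_nth w j = 0" if "j < 0" for j
    using assms(1) that by (simp add: vanishes_below_def)
  have top: "fls_nth (fls_const k * fls_X_inv + w) (-1) = k"
    using w[of "-1"] by (simp add: fls_X_inv_times_conv_shift)
  have below: "fls_nth (fls_const k * fls_X_inv + w) j = 0" if "j < -1" for j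
    using w[of j] that by (simp add: fls_X_inv_times_conv_shift)
  from top assms(2) have "fls_nth (fls_const k * fls_X_inv + w) (-1) \<noteq> 0" by simp
  then show ?thesis
    unfolding simple_pole_def using fls_nonzeroI fls_subdegree_eqI below by blast
qed

lemma simple_pole_numeral_mult_cancel:
  fixes B :: "'a::field_char_0 fls"
  assumes "simple_pole (numeral c * B)"
  shows "simple_pole B"
proof -
  have "B \<noteq> 0" using assms by (auto simp: simple_pole_def)
  moreover have "fls_subdegree (numeral c * B) = fls_subdegree B"
    using \<open>B \<noteq> 0\<close> fls_subdegree_mult[of "numeral c" B] by simp
  ultimately show ?thesis using assms by (simp add: simple_pole_def)
qed

lemma simple_pole_intros:
  fixes B :: "'a::field_char_0 fls"
  shows "B = fls_X_inv + w \<Longrightarrow> vanishes_below 0 w \<Longrightarrow> simple_pole B"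
    and "B = w - fls_X_inv \<Longrightarrow> vanishes_below 0 w \<Longrightarrow> simple_pole B"
    and "numeral c * B = fls_X_inv + w \<Longrightarrow> vanishes_below 0 w \<Longrightarrow> simple_pole B"
    and "numeral c * B = w - fls_X_inv \<Longrightarrow> vanishes_below 0 w \<Longrightarrow> simple_pole B"
proof -
  have *: "simple_pole (fls_X_inv + w)" "simple_pole (w - fls_X_inv)" if "vanishes_below 0 w"
    using simple_pole_X_inv_add[OF that, of 1] simple_pole_X_inv_add[OF that, of "-1"] by simp_all
  show "B = fls_X_inv + w \<Longrightarrow> vanishes_below 0 w \<Longrightarrow> simple_pole B"
    and "B = w - fls_X_inv \<Longrightarrow> vanishes_below 0 w \<Longrightarrow> simple_pole B"
    using * by simp_all
  show "numeral c * B = fls_X_inv + w \<Longrightarrow> vanishes_below 0 w \<Longrightarrow> simple_pole B"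
    and "numeral c * B = w - fls_X_inv \<Longrightarrow> vanishes_below 0 w \<Longrightarrow> simple_pole B"
    using * simple_pole_numeral_mult_cancel[of c B] by simp_all
qed

lemma vanishes_below_1_if_regular:
  fixes x :: "'a::idom fls"
  assumes "vanishes_below 0 x" "t_deriv x = x * B + fls_const a" "simple_pole B"
  shows "vanishes_below 1 x"
proof -
  have "x * B = t_deriv x - fls_const a"
    using assms(2) by simp
  then have "vanishes_below 0 (x * B)"
    using vanishes_below_mono[OF _ vanishes_below_t_deriv[OF assms(1)], of 0]
    by (simp add: vanishes_below_diff vanishes_below_const)
  then have "vanishes_below (0 - fls_subdegree B) x"
    using assms(3) by (intro vanishes_below_cancel) (simp_all add: simple_pole_def)
  then show ?thesis
    using assms(3) by (simp add: simple_pole_def)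
qed

text \<open>\<open>t_deriv\<close> raises the order in \<open>X\<close> by at least one, whereas multiplication by a
  simple pole lowers it by exactly one.\<close>
lemma eq_0_if_t_deriv_eq_mult_simple_pole:
  fixes x :: "'a::idom fls"
  assumes "t_deriv x = x * B" "simple_pole B"
  shows "x = 0"
proof (rule ccontr)
  assume "x \<noteq> 0"
  have "vanishes_below (fls_subdegree x + 1) (x * B)"
    using vanishes_below_t_deriv[OF vanishes_below_subdegree[of x]] assms(1) by simp
  then have "vanishes_below (fls_subdegree x + 1 - fls_subdegree B) x"
    using assms(2) by (intro vanishes_below_cancel) (simp_all add: simple_pole_def)
  then have "vanishes_below (fls_subdegree x + 2) x"
    using assms(2) by (simp add: simple_pole_def add.commute)
  with \<open>x \<noteq> 0\<close> show False
    by (simp add: vanishes_below_iff)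
qed

lemma vanishes_below_1_if_pole:
  fixes x :: "'a::idom fls"
  assumes "\<not> vanishes_below 0 x" "t_deriv x = x * B + fls_const a"
  shows "vanishes_below 1 B"
proof -
  have "x \<noteq> 0" "fls_subdegree x < 0"
    using assms(1) by (auto simp: vanishes_below_iff)
  have "B * x = t_deriv x - fls_const a"
    using assms(2) by (simp add: mult.commute)
  then have "vanishes_below (fls_subdegree x + 1) (B * x)"
    using vanishes_below_t_deriv[OF vanishes_below_subdegree[of x]]
      vanishes_below_mono[OF _ vanishes_below_const[of a], of "fls_subdegree x + 1"]
      \<open>fls_subdegree x < 0\<close>
    by (simp add: vanishes_below_diff)
  from vanishes_below_cancel[OF \<open>x \<noteq> 0\<close> this] show ?thesis by simp
qed

lemma vanishes_below_step_regular:
  fixes h :: "'a::idom fls"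
  assumes "t_deriv h = h * B + y * A" "simple_pole B"
    and "vanishes_below 1 y" "vanishes_below n A" "vanishes_below n h"
  shows "vanishes_below (n + 1) h"
proof -
  have "h * B = t_deriv h - y * A"
    using assms(1) by simp
  then have "vanishes_below (n + 1) (h * B)"
    using vanishes_below_t_deriv[OF assms(5)] vanishes_below_mult[OF assms(3,4)]
    by (simp add: vanishes_below_diff add.commute)
  then have "vanishes_below (n + 1 - fls_subdegree B) h"
    using assms(2) by (intro vanishes_below_cancel) (simp_all add: simple_pole_def)
  then show ?thesis
    using assms(2) by (auto simp: simple_pole_def elim: vanishes_below_mono[rotated])
qed

lemma vanishes_below_step_pole:
  fixes h :: "'a::idom fls"
  assumes "t_deriv h = h * B + y * A" "vanishes_below 1 B" "simple_pole y" "vanishes_below n h"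
  shows "vanishes_below (n + 2) A"
proof -
  have "A * y = t_deriv h - h * B"
    using assms(1) by (simp add: mult.commute)
  then have "vanishes_below (n + 1) (A * y)"
    using vanishes_below_t_deriv[OF assms(4)] vanishes_below_mult[OF assms(4,2)]
    by (simp add: vanishes_below_diff)
  then have "vanishes_below (n + 1 - fls_subdegree y) A"
    using assms(3) by (intro vanishes_below_cancel) (simp_all add: simple_pole_def)
  then show ?thesis
    using assms(3) by (simp add: simple_pole_def add.assoc)
qed

section \<open>The system for Laurent series\<close>

definition A4_coupling :: "(nat \<Rightarrow> 'a::ab_group_add) \<Rightarrow> nat \<Rightarrow> 'a" where
  "A4_coupling a j = a (j + 1) - a (j + 2) + a (j + 3) - a (j + 4)"

text \<open>Indices are not reduced mod 5; instead the normalisation is required for every five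
  consecutive indices, which forces \<open>a\<close> to be 5-periodic.\<close>
definition A4_laurent :: "(nat \<Rightarrow> 'a::field_char_0) \<Rightarrow> (nat \<Rightarrow> 'a fls) \<Rightarrow> bool" where
  "A4_laurent \<alpha> a \<longleftrightarrow> (\<forall>j. t_deriv (a j) = a j * A4_coupling a j + fls_const (\<alpha> j) \<and>
      a j + a (j + 1) + a (j + 2) + a (j + 3) + a (j + 4) = fls_X_inv)"

lemma A4_laurent_ode:
  "A4_laurent \<alpha> a \<Longrightarrow> t_deriv (a j) = a j * A4_coupling a j + fls_const (\<alpha> j)"
  by (simp add: A4_laurent_def)

lemma A4_laurent_periodic:
  assumes "A4_laurent \<alpha> a"
  shows "a (j + 5) = a j"
proof -
  have "a j + a (j + 1) + a (j + 2) + a (j + 3) + a (j + 4)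
      = a (j + 1) + a (j + 2) + a (j + 3) + a (j + 4) + a (j + 5)"
    using assms[unfolded A4_laurent_def, rule_format, of j]
      assms[unfolded A4_laurent_def, rule_format, of "j + 1"]
    by (simp add: eval_nat_numeral add.assoc)
  then show ?thesis by simp
qed

lemma A4_laurent_mod_5:
  assumes "A4_laurent \<alpha> a"
  shows "a (j mod 5) = a j"
proof -
  have "a (k + 5 * m) = a k" for k m
  proof (induction m)
    case (Suc m)
    then show ?case
      using A4_laurent_periodic[OF assms, of "k + 5 * m"] by (simp add: ac_simps)
  qed simp
  from this[of "j mod 5" "j div 5"] show ?thesis by simp
qed

lemma A4_laurent_explicit:
  assumes "A4_laurent \<alpha> a"
  shows "A4_coupling a 0 = a 1 - a 2 + a 3 - a 4" "A4_coupling a 1 = a 2 - a 3 + a 4 - a 0"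
    "A4_coupling a 2 = a 3 - a 4 + a 0 - a 1" "A4_coupling a 3 = a 4 - a 0 + a 1 - a 2"
    "A4_coupling a 4 = a 0 - a 1 + a 2 - a 3"
    "fls_X_inv = a 0 + a 1 + a 2 + a 3 + a 4"
  using A4_laurent_periodic[OF assms, of 0] A4_laurent_periodic[OF assms, of 1]
    A4_laurent_periodic[OF assms, of 2] A4_laurent_periodic[OF assms, of 3]
    assms[unfolded A4_laurent_def, rule_format, of 0]
  by (simp_all add: A4_coupling_def eval_nat_numeral)

lemma A4_regular_component:
  assumes "A4_laurent \<alpha> f" "vanishes_below 0 (f j)" "simple_pole (A4_coupling f j)"
  shows "vanishes_below 1 (f j)" and "\<alpha> j = 0 \<Longrightarrow> f j = 0"
  using vanishes_below_1_if_regular[OF assms(2) A4_laurent_ode[OF assms(1)] assms(3)]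
    eq_0_if_t_deriv_eq_mult_simple_pole[OF _ assms(3)] A4_laurent_ode[OF assms(1), of j]
  by simp_all

lemma A4_pole_component:
  "A4_laurent \<alpha> f \<Longrightarrow> \<not> vanishes_below 0 (f j) \<Longrightarrow> vanishes_below 1 (A4_coupling f j)"
  using vanishes_below_1_if_pole A4_laurent_ode by blast

lemma t_deriv_A4_difference:
  assumes "A4_laurent \<alpha> f" "A4_laurent \<alpha> g"
  shows "t_deriv (g j - f j)
    = (g j - f j) * A4_coupling g j + f j * (A4_coupling g j - A4_coupling f j)"
  using A4_laurent_ode[OF assms(1), of j] A4_laurent_ode[OF assms(2), of j]
  by (simp add: t_deriv_diff algebra_simps)

lemma vanishes_below_A4_coupling_diff:
  assumes "\<forall>k. vanishes_below n (g k - f k)"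
  shows "vanishes_below n (A4_coupling g j - A4_coupling f j)"
proof -
  have "A4_coupling g j - A4_coupling f j
      = (g (j + 1) - f (j + 1)) - (g (j + 2) - f (j + 2)) + (g (j + 3) - f (j + 3))
        - (g (j + 4) - f (j + 4))"
    by (simp add: A4_coupling_def algebra_simps)
  then show ?thesis
    using assms by (simp add: vanishes_below_add vanishes_below_diff)
qed

lemma A4_step_regular:
  assumes "A4_laurent \<alpha> f" "A4_laurent \<alpha> g"
    and "simple_pole (A4_coupling g j)" "vanishes_below 1 (f j)"
    and "\<forall>k. vanishes_below n (g k - f k)"
  shows "vanishes_below (n + 1) (g j - f j)"
  using vanishes_below_step_regular[OF t_deriv_A4_difference[OF assms(1,2)] assms(3,4)
      vanishes_below_A4_coupling_diff[OF assms(5)]] assms(5)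
  by blast

lemma A4_step_pole:
  assumes "A4_laurent \<alpha> f" "A4_laurent \<alpha> g"
    and "vanishes_below 1 (A4_coupling g j)" "simple_pole (f j)"
    and "vanishes_below n (g j - f j)"
  shows "vanishes_below (n + 1) (A4_coupling g j - A4_coupling f j)"
  using vanishes_below_step_pole[OF t_deriv_A4_difference[OF assms(1,2)] assms(3,4,5)]
  by (rule vanishes_below_mono[rotated]) simp

lemma A4_laurent_eqI:
  assumes "A4_laurent \<alpha> f" "A4_laurent \<beta> g"
    and "\<And>n. \<forall>k. vanishes_below n (g k - f k) \<Longrightarrow> \<forall>k<5. vanishes_below (n + 1) (g k - f k)"
  shows "g = f"
proof -
  define h where "h k = g k - f k" for k
  have h_mod: "h (k mod 5) = h k" for k
    using A4_laurent_mod_5[OF assms(1)] A4_laurent_mod_5[OF assms(2)] by (simp add: h_def)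
  define n0 where "n0 = Min ((\<lambda>k. fls_subdegree (h k)) ` {..<5})"
  have base: "\<forall>k. vanishes_below n0 (h k)"
  proof
    fix k
    have "n0 \<le> fls_subdegree (h (k mod 5))"
      unfolding n0_def by (intro Min_le) auto
    then show "vanishes_below n0 (h k)"
      using vanishes_below_mono[OF _ vanishes_below_subdegree] h_mod by metis
  qed
  have "\<forall>k. vanishes_below n (h k)" if "n0 \<le> n" for n
    using that
  proof (induction n rule: int_ge_induct)
    case (step n)
    then have "vanishes_below (n + 1) (h (k mod 5))" for k
      using assms(3)[of n] by (simp add: h_def)
    then show ?case by (simp add: h_mod)
  qed (rule base)
  then have "h k = 0" for k
    by (blast intro: eq_0_if_vanishes_below_all)
  then show ?thesis
    by (auto simp: h_def)
qed

lemma all_less_5: "(\<forall>k<5. P k) \<longleftrightarrow> P 0 \<and> P 1 \<and> P 2 \<and> P 3 \<and> P (4::nat)"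
  by (auto simp: less_Suc_eq eval_nat_numeral)

section \<open>The four cases\<close>

lemma A4_case1_simple_poles:
  assumes "A4_laurent \<alpha> f" "\<forall>k\<in>{1,2,3,4}. vanishes_below 0 (f k)"
  shows "\<forall>k\<in>{1,2,3,4}. simple_pole (A4_coupling f k)"
proof -
  note E = A4_laurent_explicit[OF assms(1)]
  have r: "vanishes_below 0 (f 1)" "vanishes_below 0 (f 2)" "vanishes_below 0 (f 3)"
    "vanishes_below 0 (f 4)"
    using assms(2) by simp_all
  have "A4_coupling f 1 = (f 1 + 2 * f 2 + 2 * f 4) - fls_X_inv"
    using E by algebra
  then have 1: "simple_pole (A4_coupling f 1)"
    by (rule simple_pole_intros) (intro vanishes_below_linear_intros; fact)
  have "A4_coupling f 2 = fls_X_inv + (- (2 * f 1) - f 2 - 2 * f 4)"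
    using E by algebra
  then have 2: "simple_pole (A4_coupling f 2)"
    by (rule simple_pole_intros) (intro vanishes_below_linear_intros; fact)
  have "A4_coupling f 3 = (2 * f 1 + f 3 + 2 * f 4) - fls_X_inv"
    using E by algebra
  then have 3: "simple_pole (A4_coupling f 3)"
    by (rule simple_pole_intros) (intro vanishes_below_linear_intros; fact)
  have "A4_coupling f 4 = fls_X_inv + (- (2 * f 1) - 2 * f 3 - f 4)"
    using E by algebra
  then have 4: "simple_pole (A4_coupling f 4)"
    by (rule simple_pole_intros) (intro vanishes_below_linear_intros; fact)
  from 1 2 3 4 show ?thesis by simp
qed

lemma A4_case1_unique:
  assumes f: "A4_laurent \<alpha> f" "\<forall>k\<in>{1,2,3,4}. vanishes_below 0 (f k)"
    and g: "A4_laurent \<alpha> g" "\<forall>k\<in>{1,2,3,4}. vanishes_below 0 (g k)"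
  shows "g = f"
proof (rule A4_laurent_eqI[OF f(1) g(1)])
  fix n assume IH: "\<forall>k. vanishes_below n (g k - f k)"
  have regular_step: "vanishes_below (n + 1) (g k - f k)" if "k \<in> {1,2,3,4}" for k
    using A4_case1_simple_poles[OF f] A4_case1_simple_poles[OF g] f(2) that
    by (intro A4_step_regular[OF f(1) g(1) _ _ IH] A4_regular_component(1)[OF f(1)]) auto
  have "g 0 - f 0 = - ((g 1 - f 1) + (g 2 - f 2) + (g 3 - f 3) + (g 4 - f 4))"
    using A4_laurent_explicit(6)[OF f(1)] A4_laurent_explicit(6)[OF g(1)] by algebra
  then have "vanishes_below (n + 1) (g 0 - f 0)"
    by (simp only:) (intro vanishes_below_linear_intros regular_step; simp)
  with regular_step show "\<forall>k<5. vanishes_below (n + 1) (g k - f k)"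
    by (simp add: all_less_5)
qed

lemma A4_case2_simple_poles:
  assumes "A4_laurent \<alpha> f" "\<forall>k\<in>{0,1,3}. \<not> vanishes_below 0 (f k)"
    "\<forall>k\<in>{2,4}. vanishes_below 0 (f k)"
  shows "\<forall>k\<in>{2,4}. simple_pole (A4_coupling f k)" and "\<forall>k\<in>{0,1}. simple_pole (f k)"
proof -
  note E = A4_laurent_explicit[OF assms(1)]
  have r: "vanishes_below 0 (f 2)" "vanishes_below 0 (f 4)"
    using assms(3) by simp_all
  have p: "vanishes_below 0 (A4_coupling f 0)" "vanishes_below 0 (A4_coupling f 1)"
    using A4_pole_component[OF assms(1), of 0] A4_pole_component[OF assms(1), of 1] assms(2)
      vanishes_below_mono[of 0 1] by auto
  have "A4_coupling f 2 = (3 * f 2 + 2 * f 4 - 2 * A4_coupling f 1) - fls_X_inv"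
    using E by algebra
  then have 2: "simple_pole (A4_coupling f 2)"
    by (rule simple_pole_intros) (intro vanishes_below_linear_intros; fact)
  have "A4_coupling f 4 = fls_X_inv + (- (2 * A4_coupling f 0) - 2 * f 2 - 3 * f 4)"
    using E by algebra
  then have 4: "simple_pole (A4_coupling f 4)"
    by (rule simple_pole_intros) (intro vanishes_below_linear_intros; fact)
  from 2 4 show "\<forall>k\<in>{2,4}. simple_pole (A4_coupling f k)" by simp
  have "f 0 = fls_X_inv + (- A4_coupling f 0 - 2 * f 2 - 2 * f 4)"
    using E by algebra
  then have 0: "simple_pole (f 0)"
    by (rule simple_pole_intros) (intro vanishes_below_linear_intros; fact)
  have "f 1 = fls_X_inv + (A4_coupling f 1 - 2 * f 2 - 2 * f 4)"
    using E by algebra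
  then have 1: "simple_pole (f 1)"
    by (rule simple_pole_intros) (intro vanishes_below_linear_intros; fact)
  from 0 1 show "\<forall>k\<in>{0,1}. simple_pole (f k)" by simp
qed

lemma A4_case2_unique:
  assumes f: "A4_laurent \<alpha> f" "\<forall>k\<in>{0,1,3}. \<not> vanishes_below 0 (f k)"
      "\<forall>k\<in>{2,4}. vanishes_below 0 (f k)"
    and g: "A4_laurent \<alpha> g" "\<forall>k\<in>{0,1,3}. \<not> vanishes_below 0 (g k)"
      "\<forall>k\<in>{2,4}. vanishes_below 0 (g k)"
  shows "g = f"
proof (rule A4_laurent_eqI[OF f(1) g(1)])
  fix n assume IH: "\<forall>k. vanishes_below n (g k - f k)"
  note F = A4_case2_simple_poles[OF f] and G = A4_case2_simple_poles[OF g]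
  have regular_step: "vanishes_below (n + 1) (g k - f k)" if "k \<in> {2,4}" for k
    using F(1) G(1) f(3) that
    by (intro A4_step_regular[OF f(1) g(1) _ _ IH] A4_regular_component(1)[OF f(1)]) auto
  have coupling_step: "vanishes_below (n + 1) (A4_coupling g k - A4_coupling f k)" if "k \<in> {0,1}" for k
    using F(2) g(2) IH that by (intro A4_step_pole[OF f(1) g(1)] A4_pole_component[OF g(1)]) auto
  note Ef = A4_laurent_explicit[OF f(1)] and Eg = A4_laurent_explicit[OF g(1)]
  have "g 0 - f 0 = - (A4_coupling g 0 - A4_coupling f 0) - 2 * (g 2 - f 2) - 2 * (g 4 - f 4)"
    using Ef Eg by algebra
  then have 0: "vanishes_below (n + 1) (g 0 - f 0)"
    by (simp only:) (intro vanishes_below_linear_intros regular_step coupling_step; simp)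
  have "g 1 - f 1 = (A4_coupling g 1 - A4_coupling f 1) - 2 * (g 2 - f 2) - 2 * (g 4 - f 4)"
    using Ef Eg by algebra
  then have 1: "vanishes_below (n + 1) (g 1 - f 1)"
    by (simp only:) (intro vanishes_below_linear_intros regular_step coupling_step; simp)
  have "g 3 - f 3 = (A4_coupling g 0 - A4_coupling f 0) - (A4_coupling g 1 - A4_coupling f 1)
      + 3 * (g 2 - f 2) + 3 * (g 4 - f 4)"
    using Ef Eg by algebra
  then have 3: "vanishes_below (n + 1) (g 3 - f 3)"
    by (simp only:) (intro vanishes_below_linear_intros regular_step coupling_step; simp)
  from 0 1 3 regular_step show "\<forall>k<5. vanishes_below (n + 1) (g k - f k)"
    by (simp add: all_less_5)
qed

lemma A4_case3_simple_poles:
  assumes "A4_laurent \<alpha> f" "\<forall>k\<in>{0,1,2}. \<not> vanishes_below 0 (f k)"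
    "\<forall>k\<in>{3,4}. vanishes_below 0 (f k)"
  shows "\<forall>k\<in>{3,4}. simple_pole (A4_coupling f k)" and "\<forall>k\<in>{0,1,2}. simple_pole (f k)"
proof -
  note E = A4_laurent_explicit[OF assms(1)]
  have r: "vanishes_below 0 (f 3)" "vanishes_below 0 (f 4)"
    using assms(3) by simp_all
  have p: "vanishes_below 0 (A4_coupling f 0)" "vanishes_below 0 (A4_coupling f 1)"
      "vanishes_below 0 (A4_coupling f 2)"
    using A4_pole_component[OF assms(1), of 0] A4_pole_component[OF assms(1), of 1]
      A4_pole_component[OF assms(1), of 2] assms(2) vanishes_below_mono[of 0 1] by auto
  have "3 * A4_coupling f 3 = (f 3 + 4 * f 4 + 2 * A4_coupling f 0 - 2 * A4_coupling f 2) - fls_X_inv"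
    using E by algebra
  then have 3: "simple_pole (A4_coupling f 3)"
    by (rule simple_pole_intros) (intro vanishes_below_linear_intros; fact)
  have "3 * A4_coupling f 4
      = fls_X_inv + (- (4 * f 3) - f 4 - 2 * A4_coupling f 0 + 2 * A4_coupling f 2)"
    using E by algebra
  then have 4: "simple_pole (A4_coupling f 4)"
    by (rule simple_pole_intros) (intro vanishes_below_linear_intros; fact)
  from 3 4 show "\<forall>k\<in>{3,4}. simple_pole (A4_coupling f k)" by simp
  have "3 * f 0 = fls_X_inv
      + (- f 3 - f 4 - 2 * A4_coupling f 0 - 3 * A4_coupling f 1 - A4_coupling f 2)"
    using E by algebra
  then have 0: "simple_pole (f 0)"
    by (rule simple_pole_intros) (intro vanishes_below_linear_intros; fact)
  have "3 * f 1 = fls_X_inv + (- f 3 - f 4 + A4_coupling f 0 - A4_coupling f 2)"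
    using E by algebra
  then have 1: "simple_pole (f 1)"
    by (rule simple_pole_intros) (intro vanishes_below_linear_intros; fact)
  have "3 * f 2 = fls_X_inv
      + (- f 3 - f 4 + A4_coupling f 0 + 3 * A4_coupling f 1 + 2 * A4_coupling f 2)"
    using E by algebra
  then have 2: "simple_pole (f 2)"
    by (rule simple_pole_intros) (intro vanishes_below_linear_intros; fact)
  from 0 1 2 show "\<forall>k\<in>{0,1,2}. simple_pole (f k)" by simp
qed

lemma A4_case3_unique:
  assumes f: "A4_laurent \<alpha> f" "\<forall>k\<in>{0,1,2}. \<not> vanishes_below 0 (f k)"
      "\<forall>k\<in>{3,4}. vanishes_below 0 (f k)"
    and g: "A4_laurent \<alpha> g" "\<forall>k\<in>{0,1,2}. \<not> vanishes_below 0 (g k)"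
      "\<forall>k\<in>{3,4}. vanishes_below 0 (g k)"
  shows "g = f"
proof (rule A4_laurent_eqI[OF f(1) g(1)])
  fix n assume IH: "\<forall>k. vanishes_below n (g k - f k)"
  note F = A4_case3_simple_poles[OF f] and G = A4_case3_simple_poles[OF g]
  have regular_step: "vanishes_below (n + 1) (g k - f k)" if "k \<in> {3,4}" for k
    using F(1) G(1) f(3) that
    by (intro A4_step_regular[OF f(1) g(1) _ _ IH] A4_regular_component(1)[OF f(1)]) auto
  have coupling_step: "vanishes_below (n + 1) (A4_coupling g k - A4_coupling f k)" if "k \<in> {0,1,2}" for k
    using F(2) g(2) IH that by (intro A4_step_pole[OF f(1) g(1)] A4_pole_component[OF g(1)]) auto
  note Ef = A4_laurent_explicit[OF f(1)] and Eg = A4_laurent_explicit[OF g(1)]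
  have "3 * (g 0 - f 0) = - (g 3 - f 3) - (g 4 - f 4) - 2 * (A4_coupling g 0 - A4_coupling f 0)
      - 3 * (A4_coupling g 1 - A4_coupling f 1) - (A4_coupling g 2 - A4_coupling f 2)"
    using Ef Eg by algebra
  then have "vanishes_below (n + 1) (3 * (g 0 - f 0))"
    by (simp only:) (intro vanishes_below_linear_intros regular_step coupling_step; simp)
  then have 0: "vanishes_below (n + 1) (g 0 - f 0)"
    by (rule vanishes_below_numeral_mult_iff[THEN iffD1])
  have "3 * (g 1 - f 1) = - (g 3 - f 3) - (g 4 - f 4) + (A4_coupling g 0 - A4_coupling f 0)
      - (A4_coupling g 2 - A4_coupling f 2)"
    using Ef Eg by algebra
  then have "vanishes_below (n + 1) (3 * (g 1 - f 1))"
    by (simp only:) (intro vanishes_below_linear_intros regular_step coupling_step; simp)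
  then have 1: "vanishes_below (n + 1) (g 1 - f 1)"
    by (rule vanishes_below_numeral_mult_iff[THEN iffD1])
  have "3 * (g 2 - f 2) = - (g 3 - f 3) - (g 4 - f 4) + (A4_coupling g 0 - A4_coupling f 0)
      + 3 * (A4_coupling g 1 - A4_coupling f 1) + 2 * (A4_coupling g 2 - A4_coupling f 2)"
    using Ef Eg by algebra
  then have "vanishes_below (n + 1) (3 * (g 2 - f 2))"
    by (simp only:) (intro vanishes_below_linear_intros regular_step coupling_step; simp)
  then have 2: "vanishes_below (n + 1) (g 2 - f 2)"
    by (rule vanishes_below_numeral_mult_iff[THEN iffD1])
  from 0 1 2 regular_step show "\<forall>k<5. vanishes_below (n + 1) (g k - f k)"
    by (simp add: all_less_5)
qed

lemma A4_coupling_shift: "A4_coupling (\<lambda>j. a (k + j)) j = A4_coupling a (k + j)"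
  by (simp add: A4_coupling_def add.assoc)

lemma A4_laurent_shift:
  assumes "A4_laurent \<alpha> a"
  shows "A4_laurent (\<lambda>j. \<alpha> (k + j)) (\<lambda>j. a (k + j))"
  unfolding A4_laurent_def A4_coupling_shift
proof
  fix j
  show "t_deriv (a (k + j)) = a (k + j) * A4_coupling a (k + j) + fls_const (\<alpha> (k + j)) \<and>
      a (k + j) + a (k + (j + 1)) + a (k + (j + 2)) + a (k + (j + 3)) + a (k + (j + 4)) = fls_X_inv"
    using assms[unfolded A4_laurent_def, rule_format, of "k + j"] by (simp add: add.assoc)
qed

lemma A4_laurent_component_from_couplings:
  assumes "A4_laurent \<alpha> a"
  shows "5 * a k = fls_X_inv + (- (3 * A4_coupling a k) - 6 * A4_coupling a (k + 1)
    - 4 * A4_coupling a (k + 2) - 2 * A4_coupling a (k + 3))"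
proof -
  note shift = A4_laurent_shift[OF assms, of k]
  have "5 * a (k + 0) = fls_X_inv + (- (3 * A4_coupling (\<lambda>j. a (k + j)) 0)
      - 6 * A4_coupling (\<lambda>j. a (k + j)) 1 - 4 * A4_coupling (\<lambda>j. a (k + j)) 2
      - 2 * A4_coupling (\<lambda>j. a (k + j)) 3)"
    using A4_laurent_explicit[OF shift] by algebra
  then show ?thesis
    by (simp only: A4_coupling_shift) simp
qed

lemma A4_laurent_all_if_less_5:
  assumes "A4_laurent \<alpha> a" "\<forall>k<5. P (a k)"
  shows "P (a k)"
  using assms(2) A4_laurent_mod_5[OF assms(1), of k] by (metis mod_less_divisor zero_less_numeral)

lemma A4_case4_simple_poles:
  assumes "A4_laurent \<alpha> f" "\<forall>k<5. \<not> vanishes_below 0 (f k)"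
  shows "simple_pole (f k)"
proof -
  have coupling: "vanishes_below 0 (A4_coupling f j)" for j
    using A4_pole_component[OF assms(1) A4_laurent_all_if_less_5[OF assms]]
      vanishes_below_mono[of 0 1] by auto
  from A4_laurent_component_from_couplings[OF assms(1), of k] show ?thesis
    by (rule simple_pole_intros) (intro vanishes_below_linear_intros coupling)
qed

lemma A4_case4_unique:
  assumes f: "A4_laurent \<alpha> f" "\<forall>k<5. \<not> vanishes_below 0 (f k)"
    and g: "A4_laurent \<alpha> g" "\<forall>k<5. \<not> vanishes_below 0 (g k)"
  shows "g = f"
proof (rule A4_laurent_eqI[OF f(1) g(1)])
  fix n assume IH: "\<forall>k. vanishes_below n (g k - f k)"
  have coupling_step: "vanishes_below (n + 1) (A4_coupling g k - A4_coupling f k)" for k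
    using IH A4_case4_simple_poles[OF f]
    by (intro A4_step_pole[OF f(1) g(1)] A4_pole_component[OF g(1) A4_laurent_all_if_less_5[OF g]])
      auto
  have "5 * (g k - f k) = - (3 * (A4_coupling g k - A4_coupling f k))
      - 6 * (A4_coupling g (k + 1) - A4_coupling f (k + 1))
      - 4 * (A4_coupling g (k + 2) - A4_coupling f (k + 2))
      - 2 * (A4_coupling g (k + 3) - A4_coupling f (k + 3))" for k
    using A4_laurent_component_from_couplings[OF f(1), of k]
      A4_laurent_component_from_couplings[OF g(1), of k] by algebra
  then have "vanishes_below (n + 1) (5 * (g k - f k))" for k
    by (simp only:) (intro vanishes_below_linear_intros coupling_step)
  then show "\<forall>k<5. vanishes_below (n + 1) (g k - f k)"
    using vanishes_below_numeral_mult_iff[THEN iffD1] by blast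
qed

definition A4_laurent_case :: "(nat \<Rightarrow> 'a::zero fls) \<Rightarrow> nat \<Rightarrow> bool" where
  "A4_laurent_case a c \<longleftrightarrow>
      (c = 1 \<and> \<not> vanishes_below 0 (a 0) \<and> (\<forall>k\<in>{1,2,3,4}. vanishes_below 0 (a k)))
    \<or> (c = 2 \<and> (\<forall>k\<in>{0,1,3}. \<not> vanishes_below 0 (a k)) \<and> (\<forall>k\<in>{2,4}. vanishes_below 0 (a k)))
    \<or> (c = 3 \<and> (\<forall>k\<in>{0,1,2}. \<not> vanishes_below 0 (a k)) \<and> (\<forall>k\<in>{3,4}. vanishes_below 0 (a k)))
    \<or> (c = 4 \<and> (\<forall>k<5. \<not> vanishes_below 0 (a k)))"

lemma A4_laurent_case_unique:
  assumes "A4_laurent \<alpha> f" "A4_laurent \<alpha> g" "A4_laurent_case f c" "A4_laurent_case g c"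
  shows "g = f"
proof -
  have "c \<in> {1, 2, 3, 4}"
    using assms(3) by (auto simp: A4_laurent_case_def)
  then show ?thesis
  proof (elim insertE emptyE)
    assume "c = 1"
    with assms(3,4) show ?thesis
      by (intro A4_case1_unique[OF assms(1) _ assms(2)]) (simp_all add: A4_laurent_case_def)
  next
    assume "c = 2"
    with assms(3,4) show ?thesis
      by (intro A4_case2_unique[OF assms(1) _ _ assms(2)]) (simp_all add: A4_laurent_case_def)
  next
    assume "c = 3"
    with assms(3,4) show ?thesis
      by (intro A4_case3_unique[OF assms(1) _ _ assms(2)]) (simp_all add: A4_laurent_case_def)
  next
    assume "c = 4"
    with assms(3,4) show ?thesis
      by (intro A4_case4_unique[OF assms(1) _ assms(2)]) (simp_all add: A4_laurent_case_def)
  qed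
qed

lemma A4_laurent_case_zero:
  assumes "A4_laurent \<alpha> f" "A4_laurent_case f c" "\<alpha> k = 0"
  shows "c = 1 \<Longrightarrow> k \<in> {1..4} \<Longrightarrow> f k = 0"
    and "c = 2 \<Longrightarrow> k \<in> {2,4} \<Longrightarrow> f k = 0"
    and "c = 3 \<Longrightarrow> k \<in> {3,4} \<Longrightarrow> f k = 0"
proof -
  note regular = A4_regular_component(2)[OF assms(1) _ _ assms(3)]
  show "c = 1 \<Longrightarrow> k \<in> {1..4} \<Longrightarrow> f k = 0"
  proof -
    assume "c = 1" "k \<in> {1..4}"
    then have "k \<in> {1,2,3,4}" "\<forall>j\<in>{1,2,3,4}. vanishes_below 0 (f j)"
      using assms(2) by (auto simp: A4_laurent_case_def)
    then show ?thesis
      using regular A4_case1_simple_poles[OF assms(1)] by blast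
  qed
  show "c = 2 \<Longrightarrow> k \<in> {2,4} \<Longrightarrow> f k = 0"
    using assms(2) regular A4_case2_simple_poles(1)[OF assms(1)]
    by (auto simp: A4_laurent_case_def)
  show "c = 3 \<Longrightarrow> k \<in> {3,4} \<Longrightarrow> f k = 0"
    using assms(2) regular A4_case3_simple_poles(1)[OF assms(1)]
    by (auto simp: A4_laurent_case_def)
qed

section \<open>Rational solutions\<close>

lemma A4_laurent_case_if_in_case:
  assumes "\<forall>k. laurent_at_inf (comp f (i + k)) (a k)" "in_case f c i"
  shows "A4_laurent_case a c"
proof -
  have pole: "pole_at_inf (comp f (i + k)) \<Longrightarrow> \<not> vanishes_below 0 (a k)" for k
    using laurent_at_inf_pole assms(1) by blast
  have regular: "regular_at_inf (comp f (i + k)) \<Longrightarrow> vanishes_below 0 (a k)" for k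
    using laurent_at_inf_regular assms(1) by blast
  have all_poles: "\<forall>j<5. pole_at_inf (f j) \<Longrightarrow> pole_at_inf (comp f (i + k))" for k
    by simp
  show ?thesis
    using assms(2) unfolding in_case_def A4_laurent_case_def
    by (elim disjE conjE) (simp_all add: pole regular all_poles)
qed

lemma sum_rotate_5:
  fixes x :: "nat \<Rightarrow> 'a::comm_monoid_add"
  shows "x (r mod 5) + x ((r + 1) mod 5) + x ((r + 2) mod 5) + x ((r + 3) mod 5) + x ((r + 4) mod 5)
    = x 0 + x 1 + x 2 + x 3 + x 4"
proof -
  have m: "(r + m) mod 5 = (r mod 5 + m) mod 5" for m
    by (simp add: mod_add_left_eq)
  have "r mod 5 \<in> {0, 1, 2, 3, 4}" by auto
  then show ?thesis
    unfolding m[of 1] m[of 2] m[of 3] m[of 4] by (elim insertE emptyE) (simp_all add: ac_simps numeral_2_eq_2)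
qed

lemma A4_laurent_of_rational_solution:
  assumes "A4_rational_solution \<alpha> f"
  obtains a where "\<forall>k. laurent_at_inf (comp f (i + k)) (a k)"
    and "A4_laurent (\<lambda>k. \<alpha> ((i + k) mod 5)) a"
proof -
  have "is_rat_fun (comp f j)" for j
    using assms by (simp add: A4_rational_solution_def)
  then have "\<exists>x. laurent_at_inf (comp f (i + k)) x" for k
    by (rule laurent_at_inf_exists)
  then obtain a where a: "\<And>k. laurent_at_inf (comp f (i + k)) (a k)"
    by metis
  have ev: "\<forall>\<^sub>F t in cofinite.
      (\<forall>j<5. (f j has_field_derivative
        (f j t * (comp f (j+1) t - comp f (j+2) t + comp f (j+3) t - comp f (j+4) t) + \<alpha> j)) (at t))
      \<and> f 0 t + f 1 t + f 2 t + f 3 t + f 4 t = t"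
    using assms by (simp add: A4_rational_solution_def)
  have shift: "comp f ((i + k) mod 5 + m) = comp f (i + (k + m))" for k m
    by (simp add: mod_add_left_eq add.assoc)
  have ode: "t_deriv (a k) = a k * A4_coupling a k + fls_const (\<alpha> ((i + k) mod 5))" for k
  proof -
    have deriv: "\<forall>\<^sub>F t in cofinite. (comp f (i + k) has_field_derivative
        (comp f (i + k) t * (comp f (i + (k + 1)) t - comp f (i + (k + 2)) t
          + comp f (i + (k + 3)) t - comp f (i + (k + 4)) t) + \<alpha> ((i + k) mod 5))) (at t)"
      using ev
    proof eventually_elim
      case (elim t)
      have "(i + k) mod 5 < 5" by simp
      from elim[THEN conjunct1, rule_format, OF this] show ?case
        unfolding shift .
    qed
    have rhs: "laurent_at_inf (\<lambda>t. comp f (i + k) t * (comp f (i + (k + 1)) t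
        - comp f (i + (k + 2)) t + comp f (i + (k + 3)) t - comp f (i + (k + 4)) t)
        + \<alpha> ((i + k) mod 5)) (a k * A4_coupling a k + fls_const (\<alpha> ((i + k) mod 5)))"
      unfolding A4_coupling_def
      by (intro laurent_at_inf_add laurent_at_inf_mult laurent_at_inf_diff laurent_at_inf_const a)
    show ?thesis
      using laurent_at_inf_deriv[OF a rhs deriv] by simp
  qed
  have sum: "a k + a (k + 1) + a (k + 2) + a (k + 3) + a (k + 4) = fls_X_inv" for k
  proof (rule laurent_at_inf_unique[OF _ laurent_at_inf_ident])
    show "laurent_at_inf (\<lambda>t. comp f (i + k) t + comp f (i + (k + 1)) t + comp f (i + (k + 2)) t
        + comp f (i + (k + 3)) t + comp f (i + (k + 4)) t)
      (a k + a (k + 1) + a (k + 2) + a (k + 3) + a (k + 4))"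
      by (intro laurent_at_inf_add a)
    show "\<forall>\<^sub>F t in cofinite. comp f (i + k) t + comp f (i + (k + 1)) t + comp f (i + (k + 2)) t
        + comp f (i + (k + 3)) t + comp f (i + (k + 4)) t = t"
      using ev by eventually_elim (use sum_rotate_5[of "\<lambda>j. f j _" "i + k"] in \<open>simp add: add.assoc\<close>)
  qed
  show ?thesis
    using a ode sum by (intro that[of a]) (simp_all add: A4_laurent_def)
qed

lemma A4_rational_solution_unique:
  assumes "A4_rational_solution \<alpha> f" "in_case f c i"
    and "A4_rational_solution \<alpha> g" "in_case g c i" "j < 5"
  shows "\<forall>\<^sub>F t in cofinite. g j t = f j t"
proof -
  obtain a where fa: "\<forall>k. laurent_at_inf (comp f (i + k)) (a k)"
    and a: "A4_laurent (\<lambda>k. \<alpha> ((i + k) mod 5)) a"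
    using A4_laurent_of_rational_solution[OF assms(1)] .
  obtain b where gb: "\<forall>k. laurent_at_inf (comp g (i + k)) (b k)"
    and b: "A4_laurent (\<lambda>k. \<alpha> ((i + k) mod 5)) b"
    using A4_laurent_of_rational_solution[OF assms(3)] .
  have "b = a"
    using A4_laurent_case_unique[OF a b] A4_laurent_case_if_in_case fa gb assms(2,4) by blast
  moreover have "(i + (4 * i + j)) mod 5 = j"
    using \<open>j < 5\<close> by simp
  ultimately have "laurent_at_inf (g j) (a (4 * i + j))" "laurent_at_inf (f j) (a (4 * i + j))"
    using gb fa by metis+
  then show ?thesis
    by (rule laurent_at_inf_eq)
qed

lemma A4_rational_solution_zero:
  assumes "A4_rational_solution \<alpha> f" "in_case f c i" "\<alpha> ((i + k) mod 5) = 0"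
  shows "c = 1 \<Longrightarrow> k \<in> {1..4} \<Longrightarrow> rat_zero (comp f (i + k))"
    and "c = 2 \<Longrightarrow> k \<in> {2,4} \<Longrightarrow> rat_zero (comp f (i + k))"
    and "c = 3 \<Longrightarrow> k \<in> {3,4} \<Longrightarrow> rat_zero (comp f (i + k))"
proof -
  obtain a where fa: "\<forall>k. laurent_at_inf (comp f (i + k)) (a k)"
    and a: "A4_laurent (\<lambda>k. \<alpha> ((i + k) mod 5)) a"
    using A4_laurent_of_rational_solution[OF assms(1)] .
  note zero = A4_laurent_case_zero[OF a A4_laurent_case_if_in_case[OF fa assms(2)], of k]
  show "c = 1 \<Longrightarrow> k \<in> {1..4} \<Longrightarrow> rat_zero (comp f (i + k))"
    and "c = 2 \<Longrightarrow> k \<in> {2,4} \<Longrightarrow> rat_zero (comp f (i + k))"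
    and "c = 3 \<Longrightarrow> k \<in> {3,4} \<Longrightarrow> rat_zero (comp f (i + k))"
    using zero assms(3) fa rat_zero_if_laurent_at_inf_0 by metis+
qed

theorem proposition1p3:
  fixes \<alpha> :: "nat \<Rightarrow> complex" and f :: "nat \<Rightarrow> complex \<Rightarrow> complex" and c i :: nat
  assumes "A4_rational_solution \<alpha> f" and "in_case f c i"
  shows "(\<forall>g. A4_rational_solution \<alpha> g \<and> in_case g c i \<longrightarrow>
            (\<forall>j<5. \<forall>\<^sub>F t in at_infinity. g j t = f j t))
       \<and> (c = 1 \<longrightarrow> (\<forall>k\<in>{1..4}. \<alpha> ((i+k) mod 5) = 0 \<longrightarrow> rat_zero (comp f (i+k))))
       \<and> (c = 2 \<longrightarrow> (\<forall>k\<in>{2,4}. \<alpha> ((i+k) mod 5) = 0 \<longrightarrow> rat_zero (comp f (i+k))))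
       \<and> (c = 3 \<longrightarrow> (\<forall>k\<in>{3,4}. \<alpha> ((i+k) mod 5) = 0 \<longrightarrow> rat_zero (comp f (i+k))))"
proof -
  have "\<forall>\<^sub>F t in at_infinity. g j t = f j t"
    if "A4_rational_solution \<alpha> g" "in_case g c i" "j < 5" for g j
    using A4_rational_solution_unique[OF assms that] by (rule eventually_at_infinity_if_cofinite)
  then show ?thesis
    using A4_rational_solution_zero[OF assms] by blast
qed

end
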